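(* Let $H$ be a reduced double-well type potential, $\beta>0$, and let $\Phi_\beta,\lambda_\beta,\nu_\beta$ be as in the context. Then $\Phi_\beta$ is constant on each cylinder $[0^n1]$ and $[1^n0]$ ($n\ge1$), $\nu_\beta$ has a Jacobian $J_\beta$ which is constant on $[00]$, $[11]$, $[01^n0]$, $[10^n1]$ ($n\ge1$), and: \begin{enumerate} \item $\Phi_\beta(0^n1)=\sum_{k\ge n}\frac{e^{-\beta H_k^1}}{\lambda_\beta^{k-n+1}}\Phi_\beta(10)$ and $\Phi_\beta(0^\infty)=\frac{e^{-\beta H_\infty^1}}{\lambda_\beta-1}\Phi_\beta(10)$; \item $\Phi_\beta(1^n0)=\sum_{k\ge n}\frac{e^{-\beta H_k^0}}{\lambda_\beta^{k-n+1}}\Phi_\beta(01)$ and $\Phi_\beta(1^\infty)=\frac{e^{-\beta H_\infty^0}}{\lambda_\beta-1}\Phi_\beta(01)$; \item if $H_\infty^0=H_\infty^1=0$, then $\max\Phi_\beta=\max\{\Phi_\beta(0^\infty),\Phi_\beta(1^\infty)\}=1$; \item $\nu_\beta[1^n0]=\lambda_\beta^{-(n-1)}\nu_\beta[10]$, and $J_\beta=\lambda_\beta$ on $[11]$; \item $\nu_\beta[0^n1]=\lambda_\beta^{-(n-1)}\nu_\beta[01]$, and $J_\beta=\lambda_\beta$ on $[00]$; \item $\nu_\beta[01^n0]=\lambda_\beta^{-n}e^{-\beta H_n^0}\nu_\beta[10]$, and $J_\beta=\lambda_\beta e^{\beta H_n^0}$ on $[01^n0]$; \item $\nu_\beta[10^n1]=\lambda_\beta^{-n}e^{-\beta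 H_n^1}\nu_\beta[01]$, and $J_\beta=\lambda_\beta e^{\beta H_n^1}$ on $[10^n1]$. \end{enumerate}
   Context: $\Sigma:=\{0,1\}^{\mathbb N}$, $\sigma$ the left shift, cylinders $[i_0\dots i_{n-1}]$. If a function $f$ is constant on $[i_0\dots i_{n-1}]$, $f(i_0\dots i_{n-1})$ denotes that value. A reduced double-well type potential is a continuous nonnegative $H:\Sigma\to\mathbb R$ with summable variation ($\sum_n\sup\{|H(x)-H(y)|:x_j=y_j,\ j<n\}<\infty$) such that $H=0$ on $[00]\cup[11]$, $H=H_n^0>0$ on $[01^n0]$, $H=H_n^1>0$ on $[10^n1]$ ($n\ge1$), and $\sum_{k\ge1}\sup_{n\ge0}|H_k^i-H_{k+n}^i|<\infty$ ($i=0,1$); $H_\infty^i:=\lim_nH_n^i$. Transfer operator $\mathcal L_\beta[\Phi](x)=e^{-\beta H(0x)}\Phi(0x)+e^{-\beta H(1x)}\Phi(1x)$; $\Phi_\beta$ is its unique positive continuous eigenfunction with $\max\Phi_\beta=1$, $\lambda_\beta>0$ its eigenvalue, $\nu_\beta$ the unique probability with $\mathcal L_\beta^*\nu_\beta=\lambda_\beta\nu_\beta$ (one has $\lambda_\beta>1$). A Jacobian of a probability $\nu$ is a nonnegative Borel $J$ such that for every bounded Borel $f$, $\int_{[0]}f\circ\sigma\,J\,d\nu=\int_{[1]}f\circ\sigma\,J\,d\nu=\int f\,d\nu$. *)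

theory Defs
  imports "HOL-Probability.Probability"
begin

text \<open>The full shift on two symbols: points of Sigma are maps nat => bool,
  False encodes the symbol 0, True encodes the symbol 1. Sigma carries the
  product topology (Function_Topology; bool has the discrete order topology)
  and its Borel sigma-algebra.\<close>

type_synonym seq = "nat \<Rightarrow> bool"

definition shift :: "seq \<Rightarrow> seq" where
  "shift x = (\<lambda>n. x (Suc n))"

definition scons :: "bool \<Rightarrow> seq \<Rightarrow> seq" where
  "scons b x = (\<lambda>n. case n of 0 \<Rightarrow> b | Suc m \<Rightarrow> x m)"

definition cyl :: "bool list \<Rightarrow> seq set" where
  "cyl w = {x. \<forall>i<length w. x i = w ! i}"

text \<open>A canonical point of the cylinder [w] (w followed by zeros); used to denote
  the value f(w) of a function f that is constant on [w].\<close>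
definition pt :: "bool list \<Rightarrow> seq" where
  "pt w = (\<lambda>i. if i < length w then w ! i else False)"

definition var :: "(seq \<Rightarrow> real) \<Rightarrow> nat \<Rightarrow> real" where
  "var H n = (SUP p \<in> {(x, y). \<forall>j<n. x j = y j}. \<bar>H (fst p) - H (snd p)\<bar>)"

definition reduced_double_well ::
  "(seq \<Rightarrow> real) \<Rightarrow> (nat \<Rightarrow> real) \<Rightarrow> (nat \<Rightarrow> real) \<Rightarrow> bool" where
  "reduced_double_well H H0 H1 \<longleftrightarrow>
     continuous_on UNIV H \<and> (\<forall>x. 0 \<le> H x) \<and> summable (var H) \<and>
     (\<forall>x \<in> cyl [False, False] \<union> cyl [True, True]. H x = 0) \<and>
     (\<forall>n\<ge>1. 0 < H0 n \<and> (\<forall>x \<in> cyl ([False] @ replicate n True @ [False]). H x = H0 n)) \<and>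
     (\<forall>n\<ge>1. 0 < H1 n \<and> (\<forall>x \<in> cyl ([True] @ replicate n False @ [True]). H x = H1 n)) \<and>
     summable (\<lambda>k. (SUP n. \<bar>H0 (k + 1) - H0 (k + 1 + n)\<bar>)) \<and>
     summable (\<lambda>k. (SUP n. \<bar>H1 (k + 1) - H1 (k + 1 + n)\<bar>))"

definition transfer :: "(seq \<Rightarrow> real) \<Rightarrow> real \<Rightarrow> (seq \<Rightarrow> real) \<Rightarrow> seq \<Rightarrow> real" where
  "transfer H \<beta> \<Phi> x =
     exp (- \<beta> * H (scons False x)) * \<Phi> (scons False x) +
     exp (- \<beta> * H (scons True x)) * \<Phi> (scons True x)"

definition is_jacobian :: "seq measure \<Rightarrow> (seq \<Rightarrow> real) \<Rightarrow> bool" where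
  "is_jacobian \<nu> J \<longleftrightarrow> J \<in> borel_measurable \<nu> \<and> (\<forall>x. 0 \<le> J x) \<and>
     (\<forall>f::seq \<Rightarrow> real. f \<in> borel_measurable \<nu> \<and> bounded (range f) \<longrightarrow>
        (\<integral>x. indicator (cyl [False]) x * f (shift x) * J x \<partial>\<nu>) = (\<integral>x. f x \<partial>\<nu>) \<and>
        (\<integral>x. indicator (cyl [True]) x * f (shift x) * J x \<partial>\<nu>) = (\<integral>x. f x \<partial>\<nu>))"

end

theory Submission
  imports Defs
begin

text \<open>If \<open>x\<close> and \<open>y\<close> share a prefix containing a switch \<open>ab\<close> (with \<open>a \<noteq> b\<close>), then \<open>H\<close> cannot tell
  \<open>ux\<close> from \<open>uy\<close> for any nonempty word \<open>u\<close>; since the iterates of the transfer operator are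
  \<open>\<lambda>\<^sup>N \<Phi>\<close> and only sample \<open>\<Phi>\<close> at such points, uniform continuity of \<open>\<Phi>\<close> forces
  \<open>\<Phi> x = \<Phi> y\<close>. Hence \<open>\<Phi>\<close> is constant on \<open>[b\<^sup>n \<not>b]\<close>, and the eigen-equation at these points becomes a
  linear recurrence in \<open>n\<close> whose bounded solution is the stated series; at the constant points it
  gives \<open>\<Phi>(b\<^sup>\<infinity>)\<close> and \<open>\<lambda> > 1\<close>. Dually, testing \<open>\<nu>\<close> against indicators of cylinders gives
  \<open>\<lambda> \<nu>[aw] = exp (-\<beta>h) \<nu>[w]\<close> whenever \<open>H(ax) = h\<close> on \<open>[w]\<close>, and it shows that \<open>shift\<close> pushes
  the measure with density \<open>indicator [a] \<cdot> \<lambda> exp (\<beta>H)\<close> with respect to \<open>\<nu>\<close> forward to \<open>\<nu>\<close>,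
  i.e. that \<open>\<lambda> exp (\<beta>H)\<close> is a Jacobian of \<open>\<nu>\<close>.\<close>

section \<open>Cylinders and the topology of the full shift\<close>

lemma cyl_Nil [simp]: "cyl [] = UNIV"
  by (simp add: cyl_def)

lemma mem_cyl_Cons: "x \<in> cyl (a # w) \<longleftrightarrow> x 0 = a \<and> shift x \<in> cyl w"
  by (simp add: cyl_def shift_def All_less_Suc2)

lemma scons_in_cyl_Cons [simp]: "scons b x \<in> cyl (c # w) \<longleftrightarrow> b = c \<and> x \<in> cyl w"
  by (simp add: cyl_def scons_def All_less_Suc2)

lemma mem_cyl_pair: "x \<in> cyl [a, b] \<longleftrightarrow> x 0 = a \<and> x 1 = b"
  by (auto simp: cyl_def less_Suc_eq)

lemma mem_cyl_run: "x \<in> cyl (replicate n b @ [c]) \<longleftrightarrow> (\<forall>i<n. x i = b) \<and> x n = c"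
proof -
  have "(replicate n b @ [c]) ! i = (if i < n then b else c)" if "i < Suc n" for i
    using that by (auto simp: nth_append)
  then show ?thesis by (auto simp: cyl_def less_Suc_eq)
qed

lemma cyl_mono_prefix: "x \<in> cyl w \<Longrightarrow> \<forall>i<L. x i = y i \<Longrightarrow> length w \<le> L \<Longrightarrow> y \<in> cyl w"
  by (auto simp: cyl_def)

lemma pt_in_cyl: "pt w \<in> cyl w"
  by (simp add: cyl_def pt_def)

lemma mem_cyl_iff_prefix:
  assumes "length w = K" shows "x \<in> cyl w \<longleftrightarrow> map x [0..<K] = w"
proof
  assume "map x [0..<K] = w"
  then have "x i = w ! i" if "i < length w" for i
    using assms that by (metis add_0 diff_zero nth_map_upt)
  then show "x \<in> cyl w" by (simp add: cyl_def)
qed (use assms in \<open>auto simp: cyl_def intro!: nth_equalityI\<close>)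

lemma scons_0 [simp]: "scons a x 0 = a" and scons_Suc [simp]: "scons a x (Suc i) = x i"
  by (simp_all add: scons_def)

lemma scons_const: "scons b (\<lambda>_. b) = (\<lambda>_. b)"
  by (simp add: fun_eq_iff scons_def split: nat.split)

lemma first_switch:
  assumes "x i \<noteq> x 0"
  obtains n where "1 \<le> n" "n \<le> i" "x \<in> cyl (replicate n (x 0) @ [\<not> x 0])"
proof -
  define n where "n = (LEAST i. x i \<noteq> x 0)"
  have switch: "x n \<noteq> x 0" unfolding n_def by (rule LeastI[of _ i]) (rule assms)
  have "n \<le> i" unfolding n_def by (rule Least_le) (rule assms)
  have "x k = x 0" if "k < n" for k using not_less_Least[OF that[unfolded n_def]] by blast
  with switch have "x \<in> cyl (replicate n (x 0) @ [\<not> x 0])" unfolding mem_cyl_run by blast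
  moreover have "1 \<le> n" using switch by (cases n) auto
  ultimately show thesis using \<open>n \<le> i\<close> that by blast
qed

lemma constant_or_run: "x = (\<lambda>_. x 0) \<or> (\<exists>n\<ge>1. x \<in> cyl (replicate n (x 0) @ [\<not> x 0]))"
proof (cases "\<exists>i. x i \<noteq> x 0")
  case True
  then obtain i where "x i \<noteq> x 0" by blast
  then show ?thesis by (rule first_switch) blast
next
  case False
  then have "x = (\<lambda>_. x 0)" by (intro ext) blast
  then show ?thesis ..
qed

lemma open_cyl: "open (cyl w)"
proof -
  have "cyl w = {f. \<forall>i\<in>{..<length w}. f i \<in> {w ! i}}" by (auto simp: cyl_def)
  also have "open \<dots>"
    by (rule product_topology_basis') (simp_all add: discrete_topology_class.open_discrete)
  finally show ?thesis .
qed

lemma continuous_on_prefix_fun: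
  fixes g :: "bool list \<Rightarrow> 'b::topological_space"
  shows "continuous_on UNIV (\<lambda>x::seq. g (map x [0..<K]))"
proof -
  have "(\<lambda>x::seq. g (map x [0..<K])) -` B = (\<Union>v\<in>{v. length v = K \<and> g v \<in> B}. cyl v)" for B
    by (auto simp: mem_cyl_iff_prefix)
  then show ?thesis by (auto simp: continuous_on_open_vimage intro!: open_UN open_cyl)
qed

lemma continuous_on_indicator_cyl: "continuous_on UNIV (indicator (cyl w) :: seq \<Rightarrow> real)"
proof -
  have "indicator (cyl w) = (\<lambda>x::seq. (if map x [0..<length w] = w then 1 else 0 :: real))"
    by (simp add: fun_eq_iff indicator_def mem_cyl_iff_prefix)
  then show ?thesis
    using continuous_on_prefix_fun[of "\<lambda>v. if v = w then 1 else 0 :: real" "length w"] by simp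
qed

lemma open_contains_cyl:
  assumes "open U" "x \<in> U"
  obtains N where "cyl (map x [0..<N]) \<subseteq> U"
proof -
  have "openin (product_topology (\<lambda>i. euclidean) UNIV) U" using assms(1) by (simp add: open_fun_def)
  from product_topology_open_contains_basis[OF this assms(2)] obtain X where
    X: "x \<in> (\<Pi>\<^sub>E i\<in>UNIV. X i)" "finite {i. X i \<noteq> UNIV}" "(\<Pi>\<^sub>E i\<in>UNIV. X i) \<subseteq> U"
    by auto
  obtain N where N: "\<forall>i\<in>{i. X i \<noteq> UNIV}. i < N"
    using finite_nat_bounded[OF X(2)] by (auto simp: lessThan_def)
  have "cyl (map x [0..<N]) \<subseteq> (\<Pi>\<^sub>E i\<in>UNIV. X i)"
  proof
    fix y assume y: "y \<in> cyl (map x [0..<N])"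
    have "y i \<in> X i" for i
      using X(1) N y by (cases "i < N") (auto simp: cyl_def)
    then show "y \<in> (\<Pi>\<^sub>E i\<in>UNIV. X i)" by (simp add: PiE_iff)
  qed
  with X(3) have "cyl (map x [0..<N]) \<subseteq> U" by (rule subset_trans[rotated])
  then show ?thesis by (rule that)
qed

lemma compact_UNIV_seq: "compact (UNIV :: seq set)"
proof -
  have "compact_space (product_topology (\<lambda>i. euclidean :: bool topology) (UNIV :: nat set))"
    unfolding compact_space_product_topology
    by (simp add: compact_space_def compactin_euclidean_iff finite_imp_compact)
  then show ?thesis by (simp add: euclidean_product_topology compact_space_def)
qed

lemma uniformly_continuous_seq:
  fixes f :: "seq \<Rightarrow> real"
  assumes f: "continuous_on UNIV f" and e: "e > 0"
  obtains K where "\<And>x y. \<forall>i<K. x i = y i \<Longrightarrow> \<bar>f x - f y\<bar> < e"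
proof -
  define U where "U z = f -` ball (f z) (e/2)" for z
  have "\<exists>N. cyl (map z [0..<N]) \<subseteq> U z" for z
  proof (rule open_contains_cyl)
    show "open (U z)" using f by (simp add: U_def continuous_on_open_vimage)
    show "z \<in> U z" using e by (simp add: U_def)
  qed blast
  then obtain N where N: "\<And>z. cyl (map z [0..<N z]) \<subseteq> U z" by metis
  have cover: "UNIV \<subseteq> (\<Union>z\<in>UNIV. cyl (map z [0..<N z]))"
    by (auto simp: cyl_def)
  obtain C where C: "finite C" "UNIV \<subseteq> (\<Union>z\<in>C. cyl (map z [0..<N z]))"
    by (rule compactE_image[OF compact_UNIV_seq open_cyl cover]) blast
  show ?thesis
  proof
    fix x y :: seq assume xy: "\<forall>i<Max (insert 0 (N ` C)). x i = y i"
    obtain z where z: "z \<in> C" "x \<in> cyl (map z [0..<N z])" using C(2) by blast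
    have "N z \<le> Max (insert 0 (N ` C))" using C(1) z(1) by simp
    then have "y \<in> cyl (map z [0..<N z])" using z xy by (auto simp: cyl_def)
    then have "f x \<in> ball (f z) (e/2)" "f y \<in> ball (f z) (e/2)"
      using z N unfolding U_def by blast+
    then have "dist (f x) (f y) < e" by (metis dist_triangle_half_r mem_ball)
    then show "\<bar>f x - f y\<bar> < e" by (simp add: dist_real_def)
  qed
qed

lemma Int_stable_cyl: "Int_stable (insert {} (range cyl))"
proof -
  have "cyl v \<inter> cyl w \<in> insert {} (range cyl)" for v w
  proof (cases "\<exists>i < min (length v) (length w). v ! i \<noteq> w ! i")
    case True
    then have "cyl v \<inter> cyl w = {}" by (auto simp: cyl_def)
    then show ?thesis by simp
  next
    case False
    then have "cyl v \<inter> cyl w = (if length v \<le> length w then cyl w else cyl v)"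
      by (auto simp: cyl_def)
    then show ?thesis by simp
  qed
  then show ?thesis unfolding Int_stable_def by auto
qed

lemma sets_borel_seq_cyl: "sets (borel :: seq measure) = sigma_sets UNIV (insert {} (range cyl))"
  unfolding sets_borel
proof (rule sigma_sets_eqI)
  fix S :: "seq set" assume "S \<in> {S. open S}"
  have "S \<subseteq> \<Union> {c \<in> range cyl. c \<subseteq> S}"
  proof
    fix x assume "x \<in> S"
    obtain N where "cyl (map x [0..<N]) \<subseteq> S"
      using open_contains_cyl[of S x] \<open>x \<in> S\<close> \<open>S \<in> {S. open S}\<close> by blast
    moreover have "x \<in> cyl (map x [0..<N])" by (simp add: cyl_def)
    ultimately show "x \<in> \<Union> {c \<in> range cyl. c \<subseteq> S}" by blast
  qed
  then have "S = \<Union> {c \<in> range cyl. c \<subseteq> S}" by blast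
  also have "\<dots> \<in> sigma_sets UNIV (insert {} (range cyl))"
    by (rule sigma_sets_UNION) (auto intro: sigma_sets.Basic)
  finally show "S \<in> sigma_sets UNIV (insert {} (range cyl))" .
qed (auto intro: sigma_sets.Basic sigma_sets.Empty open_cyl)

lemma borel_measurable_shift: "shift \<in> borel_measurable borel"
proof (rule borel_measurable_continuous_onI)
  show "continuous_on UNIV shift"
    unfolding shift_def
    by (intro continuous_on_coordinatewise_then_product continuous_on_product_coordinates)
qed

section \<open>The transfer operator\<close>

definition prepend :: "bool list \<Rightarrow> seq \<Rightarrow> seq" where
  "prepend u x = foldr scons u x"

lemma prepend_Cons [simp]: "prepend (a # u) x = scons a (prepend u x)"
  and prepend_snoc: "prepend (u @ [a]) x = prepend u (scons a x)"
  by (simp_all add: prepend_def)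

lemma prepend_nth_low: "i < length u \<Longrightarrow> prepend u x i = u ! i"
proof (induction u arbitrary: i)
  case (Cons a u)
  then show ?case by (cases i) auto
qed simp

lemma prepend_nth_high: "prepend u x (length u + i) = x i"
  by (induction u) (auto simp: prepend_def)

lemma transfer_iterate_mono:
  assumes "\<And>x. f x \<le> g x"
  shows "(transfer H \<beta> ^^ N) f x \<le> (transfer H \<beta> ^^ N) g x"
proof (induction N arbitrary: x)
  case (Suc N)
  then show ?case by (simp add: transfer_def add_mono mult_left_mono)
qed (simp add: assms)

lemma transfer_iterate_cmult:
  "(transfer H \<beta> ^^ N) (\<lambda>x. c * f x) x = c * (transfer H \<beta> ^^ N) f x"
proof (induction N arbitrary: x)
  case (Suc N)
  then show ?case by (simp add: transfer_def algebra_simps)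
qed simp

lemma transfer_iterate_eigen:
  assumes "\<And>x. transfer H \<beta> \<Phi> x = lam * \<Phi> x"
  shows "(transfer H \<beta> ^^ N) \<Phi> x = lam ^ N * \<Phi> x"
proof (induction N arbitrary: x)
  case (Suc N)
  have "transfer H \<beta> \<Phi> = (\<lambda>x. lam * \<Phi> x)" using assms by (rule ext)
  then have "(transfer H \<beta> ^^ Suc N) \<Phi> x = lam * (transfer H \<beta> ^^ N) \<Phi> x"
    by (simp only: funpow_Suc_right comp_apply transfer_iterate_cmult)
  then show ?case by (simp add: Suc.IH)
qed simp

text \<open>The iterates of the transfer operator only see the values of \<open>f\<close> at the points \<open>u x\<close>
  with \<open>length u = N\<close>, weighted by the potential along the way; so if the potential cannot
  distinguish the prefixed points \<open>u x\<close> and \<open>u y\<close>, the iterates inherit the modulus of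
  continuity of \<open>f\<close> at scale \<open>K + N\<close>.\<close>

lemma transfer_iterate_diff:
  assumes "\<forall>x' y'. (\<forall>i<K+N. x' i = y' i) \<longrightarrow> \<bar>f x' - f y'\<bar> \<le> e"
    and "\<forall>i<K. x i = y i"
    and "\<forall>u. u \<noteq> [] \<longrightarrow> H (prepend u x) = H (prepend u y)"
  shows "\<bar>(transfer H \<beta> ^^ N) f x - (transfer H \<beta> ^^ N) f y\<bar>
           \<le> e * (transfer H \<beta> ^^ N) (\<lambda>_. 1) x"
  using assms
proof (induction N arbitrary: K x y)
  case (Suc N)
  let ?g = "(transfer H \<beta> ^^ N) f" and ?o = "(transfer H \<beta> ^^ N) (\<lambda>_. 1)"
  have step: "\<bar>?g (scons a x) - ?g (scons a y)\<bar> \<le> e * ?o (scons a x)" for a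
  proof (rule Suc.IH[of "Suc K"])
    show "\<forall>x' y'. (\<forall>i<Suc K + N. x' i = y' i) \<longrightarrow> \<bar>f x' - f y'\<bar> \<le> e"
      using Suc.prems(1) by simp
    show "\<forall>i<Suc K. scons a x i = scons a y i"
      using Suc.prems(2) by (auto simp: scons_def split: nat.split)
    show "\<forall>u. u \<noteq> [] \<longrightarrow> H (prepend u (scons a x)) = H (prepend u (scons a y))"
      using Suc.prems(3) by (metis prepend_snoc snoc_eq_iff_butlast)
  qed
  have H_scons: "H (scons a x) = H (scons a y)" for a
    using Suc.prems(3)[rule_format, of "[a]"] by (simp add: prepend_def)
  have "\<bar>(transfer H \<beta> ^^ Suc N) f x - (transfer H \<beta> ^^ Suc N) f y\<bar>
     = \<bar>exp (- \<beta> * H (scons False x)) * (?g (scons False x) - ?g (scons False y)) +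
        exp (- \<beta> * H (scons True x)) * (?g (scons True x) - ?g (scons True y))\<bar>"
    by (simp add: transfer_def H_scons algebra_simps)
  also have "\<dots> \<le> exp (- \<beta> * H (scons False x)) * \<bar>?g (scons False x) - ?g (scons False y)\<bar> +
        exp (- \<beta> * H (scons True x)) * \<bar>?g (scons True x) - ?g (scons True y)\<bar>"
    by (metis (no_types, lifting) abs_exp_cancel abs_mult abs_triangle_ineq)
  also have "\<dots> \<le> exp (- \<beta> * H (scons False x)) * (e * ?o (scons False x)) +
        exp (- \<beta> * H (scons True x)) * (e * ?o (scons True x))"
    by (intro add_mono mult_left_mono step) auto
  also have "\<dots> = e * (transfer H \<beta> ^^ Suc N) (\<lambda>_. 1) x"
    by (simp add: transfer_def algebra_simps)
  finally show ?case .
qed simp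

lemma eigenfunction_eq_if_potential_eq:
  assumes cont: "continuous_on UNIV \<Phi>" and pos: "\<And>x. 0 < \<Phi> x" and lam: "0 < lam"
    and eigen: "\<And>x. transfer H \<beta> \<Phi> x = lam * \<Phi> x"
    and same: "\<forall>u. u \<noteq> [] \<longrightarrow> H (prepend u x) = H (prepend u y)"
  shows "\<Phi> x = \<Phi> y"
proof -
  obtain z where z: "\<And>y. \<Phi> z \<le> \<Phi> y"
    using continuous_attains_inf[OF compact_UNIV_seq _ cont] by auto
  define m where "m = \<Phi> z"
  have m: "0 < m" "\<And>y. m \<le> \<Phi> y" using z pos by (auto simp: m_def)
  have close: "\<bar>\<Phi> x - \<Phi> y\<bar> \<le> e * \<Phi> x" if e: "e > 0" for e
  proof -
    \<comment> \<open>\<open>1 \<le> \<Phi> / m\<close> bounds the total weight of the \<open>K\<close>-th iterate by \<open>\<lambda>\<^sup>K \<Phi> x / m\<close>.\<close>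
    obtain K where K: "\<And>x y. \<forall>i<K. x i = y i \<Longrightarrow> \<bar>\<Phi> x - \<Phi> y\<bar> < e * m"
      using uniformly_continuous_seq[OF cont, of "e * m"] e m by auto
    have "(transfer H \<beta> ^^ K) (\<lambda>_. 1) x \<le> (transfer H \<beta> ^^ K) (\<lambda>x. (1/m) * \<Phi> x) x"
      by (rule transfer_iterate_mono) (use m in \<open>simp add: field_simps\<close>)
    also have "\<dots> = (1/m) * (lam ^ K * \<Phi> x)"
      by (simp only: transfer_iterate_cmult transfer_iterate_eigen[OF eigen])
    finally have ones: "(transfer H \<beta> ^^ K) (\<lambda>_. 1) x \<le> (1/m) * (lam ^ K * \<Phi> x)" .
    have "lam ^ K * \<bar>\<Phi> x - \<Phi> y\<bar>
        = \<bar>(transfer H \<beta> ^^ K) \<Phi> x - (transfer H \<beta> ^^ K) \<Phi> y\<bar>"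
      using lam by (simp add: transfer_iterate_eigen[OF eigen] abs_mult flip: right_diff_distrib)
    also have "\<dots> \<le> e * m * (transfer H \<beta> ^^ K) (\<lambda>_. 1) x"
      by (rule transfer_iterate_diff[where K = 0]) (use K same in \<open>auto intro: less_imp_le\<close>)
    also have "\<dots> \<le> e * m * ((1/m) * (lam ^ K * \<Phi> x))"
      using ones e m by (intro mult_left_mono) auto
    also have "\<dots> = lam ^ K * (e * \<Phi> x)" using m by simp
    finally show ?thesis using lam by simp
  qed
  show ?thesis
  proof (rule ccontr)
    assume "\<Phi> x \<noteq> \<Phi> y"
    then have "0 < \<bar>\<Phi> x - \<Phi> y\<bar> / (2 * \<Phi> x)" using pos[of x] by simp
    from close[OF this] show False using pos[of x] \<open>\<Phi> x \<noteq> \<Phi> y\<close> by simp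
  qed
qed

section \<open>Double-well potentials\<close>

locale double_well =
  fixes H :: "seq \<Rightarrow> real" and H0 H1 :: "nat \<Rightarrow> real"
  assumes reduced_double_well: "reduced_double_well H H0 H1"
begin

text \<open>Wells are indexed by the symbol \<open>b\<close> of their inner run \<open>[\<not>b b\<^sup>n \<not>b]\<close>, so
  \<open>barrier True = H0\<close> and \<open>barrier False = H1\<close>.\<close>

definition barrier :: "bool \<Rightarrow> nat \<Rightarrow> real" where
  "barrier b = (if b then H0 else H1)"

lemma continuous_H: "continuous_on UNIV H"
  using reduced_double_well by (simp add: reduced_double_well_def)

lemma H_flat: "x \<in> cyl [b, b] \<Longrightarrow> H x = 0"
  using reduced_double_well by (cases b) (auto simp: reduced_double_well_def)

lemma H_well: "1 \<le> n \<Longrightarrow> x \<in> cyl ((\<not> b) # replicate n b @ [\<not> b]) \<Longrightarrow> H x = barrier b n"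
  using reduced_double_well by (cases b) (auto simp: reduced_double_well_def barrier_def)

lemma barrier_pos: "1 \<le> n \<Longrightarrow> 0 < barrier b n"
  using reduced_double_well by (cases b) (auto simp: reduced_double_well_def barrier_def)

text \<open>\<open>H v\<close> only depends on \<open>v\<close> up to its first switch after position 0, so any switch beyond
  position 0 within a common prefix forces equal values.\<close>

lemma H_eq_if_switch:
  assumes vw: "\<forall>i<L. v i = w i" and j: "1 \<le> j" "j + 1 < L" "v j \<noteq> v (Suc j)"
  shows "H v = H w"
proof (cases "v 0 = v 1")
  case True
  then have "v \<in> cyl [v 0, v 0]" by (simp add: mem_cyl_pair)
  moreover have "w \<in> cyl [v 0, v 0]" using cyl_mono_prefix[OF calculation vw] j by simp
  ultimately show ?thesis by (simp add: H_flat)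
next
  case False
  have "shift v (j - 1) \<noteq> shift v 0 \<or> shift v j \<noteq> shift v 0"
    using j by (auto simp: shift_def)
  then obtain i where "i \<le> j" "shift v i \<noteq> shift v 0" by (metis diff_le_self order_refl)
  then obtain n where n: "1 \<le> n" "n \<le> j" "shift v \<in> cyl (replicate n (v 1) @ [\<not> v 1])"
    by (elim first_switch) (auto simp: shift_def)
  with False have "v \<in> cyl ((\<not> v 1) # replicate n (v 1) @ [\<not> v 1])"
    by (simp add: mem_cyl_Cons)
  moreover have "w \<in> cyl ((\<not> v 1) # replicate n (v 1) @ [\<not> v 1])"
    using cyl_mono_prefix[OF calculation vw] n j by simp
  ultimately show ?thesis using n by (simp add: H_well)
qed

lemma lim_barrier: "lim (barrier b) = H (scons (\<not> b) (\<lambda>_. b))"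
proof -
  define q where "q = scons (\<not> b) (\<lambda>_. b)"
  define well where "well n = pt ((\<not> b) # replicate n b @ [\<not> b])" for n
  have "well \<longlonglongrightarrow> q"
  proof (rule topological_tendstoI)
    fix S assume "open S" "q \<in> S"
    then obtain N where N: "cyl (map q [0..<N]) \<subseteq> S" by (rule open_contains_cyl)
    have "well n \<in> cyl (map q [0..<N])" if "N \<le> n" for n
      using that by (auto simp: cyl_def well_def q_def pt_def nth_append scons_def split: nat.split)
    with N show "eventually (\<lambda>n. well n \<in> S) sequentially"
      unfolding eventually_sequentially by blast
  qed
  then have "(\<lambda>n. H (well n)) \<longlonglongrightarrow> H q"
    by (rule continuous_on_tendsto_compose[OF continuous_H]) auto
  moreover have "\<forall>\<^sub>F n in sequentially. H (well n) = barrier b n"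
    unfolding eventually_sequentially well_def by (auto intro: H_well pt_in_cyl)
  ultimately have "barrier b \<longlonglongrightarrow> H q" by (rule Lim_transform_eventually)
  then show ?thesis unfolding q_def by (rule limI)
qed

end

section \<open>The eigenfunction\<close>

lemma recurrence_sums:
  fixes a c :: "nat \<Rightarrow> real"
  assumes lam: "1 < lam" and bounded: "\<And>m. \<bar>a m\<bar> \<le> B"
    and rec: "\<And>m. lam * a m = a (Suc m) + c m"
  shows "(\<lambda>k. c k / lam ^ (k + 1)) sums a 0"
proof -
  have partial: "(\<Sum>k<m. c k / lam ^ (k + 1)) = a 0 - a m / lam ^ m" for m
  proof (induction m)
    case (Suc m)
    have "c m / lam ^ (m + 1) = a m / lam ^ m - a (Suc m) / lam ^ Suc m"
      using rec[of m] lam by (simp add: field_simps)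
    then show ?case using Suc by simp
  qed simp
  have "(\<lambda>m. (1 / lam) ^ m) \<longlonglongrightarrow> 0" using lam by (intro LIMSEQ_power_zero) simp
  then have geometric: "(\<lambda>m. B * (1 / lam) ^ m) \<longlonglongrightarrow> 0" by (simp add: tendsto_mult_right_zero)
  have "norm (a m / lam ^ m) \<le> B * (1 / lam) ^ m" for m
    using bounded[of m] lam by (simp add: abs_divide power_one_over divide_right_mono)
  then have "(\<lambda>m. a m / lam ^ m) \<longlonglongrightarrow> 0"
    by (intro Lim_null_comparison[OF always_eventually geometric]) simp
  then have "(\<lambda>m. a 0 - a m / lam ^ m) \<longlonglongrightarrow> a 0 - 0" by (intro tendsto_intros)
  then show ?thesis unfolding sums_def partial by simp
qed

locale double_well_eigenfunction = double_well +
  fixes \<beta> lam :: real and \<Phi> :: "seq \<Rightarrow> real"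
  assumes Phi_continuous: "continuous_on UNIV \<Phi>"
    and Phi_pos: "\<And>x. 0 < \<Phi> x"
    and Phi_le_1: "\<And>x. \<Phi> x \<le> 1"
    and lam_pos: "0 < lam"
    and eigen: "\<And>x. transfer H \<beta> \<Phi> x = lam * \<Phi> x"
begin

lemma Phi_eq_if_switch:
  assumes "\<forall>i<j + 2. x i = y i" "x j \<noteq> x (Suc j)"
  shows "\<Phi> x = \<Phi> y"
proof (rule eigenfunction_eq_if_potential_eq[OF Phi_continuous Phi_pos lam_pos eigen])
  show "\<forall>u. u \<noteq> [] \<longrightarrow> H (prepend u x) = H (prepend u y)"
  proof (intro allI impI)
    fix u :: "bool list" assume "u \<noteq> []"
    then have "1 \<le> length u" by (cases u) auto
    show "H (prepend u x) = H (prepend u y)"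
    proof (rule H_eq_if_switch[where L = "length u + j + 2" and j = "length u + j"])
      show "\<forall>i<length u + j + 2. prepend u x i = prepend u y i"
        using assms(1) by (metis add_diff_inverse_nat add_less_cancel_left add.assoc
            prepend_nth_high prepend_nth_low)
      show "prepend u x (length u + j) \<noteq> prepend u x (Suc (length u + j))"
        using assms(2) prepend_nth_high[of u x] by (metis add_Suc_right)
    qed (use \<open>1 \<le> length u\<close> in auto)
  qed
qed

lemma Phi_const_on_run:
  assumes "1 \<le> n" "x \<in> cyl (replicate n b @ [\<not> b])" "y \<in> cyl (replicate n b @ [\<not> b])"
  shows "\<Phi> x = \<Phi> y"
proof (rule Phi_eq_if_switch[where j = "n - 1"])
  show "\<forall>i<n - 1 + 2. x i = y i" "x (n - 1) \<noteq> x (Suc (n - 1))"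
    using assms by (auto simp: mem_cyl_run less_Suc_eq)
qed

lemma Phi_on_cyl_pair: "x \<in> cyl [\<not> b, b] \<Longrightarrow> \<Phi> x = \<Phi> (pt [\<not> b, b])"
  using Phi_const_on_run[of 1 x "\<not> b" "pt [\<not> b, b]"] pt_in_cyl by simp

lemma eigen_run:
  assumes n: "1 \<le> n" and x: "x \<in> cyl (replicate n b @ [\<not> b])"
  shows "lam * \<Phi> x = \<Phi> (scons b x) + exp (- \<beta> * barrier b n) * \<Phi> (pt [\<not> b, b])"
proof -
  have x0: "x 0 = b" using x n by (simp add: mem_cyl_run)
  have "H (scons b x) = 0" using x0 by (simp add: H_flat mem_cyl_pair)
  moreover have "H (scons (\<not> b) x) = barrier b n" using x n by (simp add: H_well)
  moreover have "\<Phi> (scons (\<not> b) x) = \<Phi> (pt [\<not> b, b])"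
    using x0 by (simp add: Phi_on_cyl_pair mem_cyl_pair)
  ultimately show ?thesis using eigen[of x] by (cases b) (simp_all add: transfer_def)
qed

lemma eigen_constant:
  "lam * \<Phi> (\<lambda>_. b) = \<Phi> (\<lambda>_. b) + exp (- \<beta> * lim (barrier b)) * \<Phi> (pt [\<not> b, b])"
proof -
  have "\<Phi> (scons (\<not> b) (\<lambda>_. b)) = \<Phi> (pt [\<not> b, b])" by (simp add: Phi_on_cyl_pair mem_cyl_pair)
  moreover have "H (scons b (\<lambda>_. b)) = 0" by (simp add: H_flat mem_cyl_pair)
  ultimately show ?thesis
    using eigen[of "\<lambda>_. b"] by (cases b) (simp_all add: transfer_def scons_const lim_barrier)
qed

lemma lam_gt_1: "1 < lam"
proof -
  have "1 * \<Phi> (\<lambda>_. False) < lam * \<Phi> (\<lambda>_. False)"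
    using eigen_constant[of False] Phi_pos[of "pt [True, False]"] by simp
  then show ?thesis using Phi_pos mult_less_cancel_right_pos by blast
qed

lemma Phi_constant:
  "\<Phi> (\<lambda>_. b) = exp (- \<beta> * lim (barrier b)) / (lam - 1) * \<Phi> (pt [\<not> b, b])"
  using eigen_constant[of b] lam_gt_1 by (simp add: field_simps)

lemma Phi_run_sums:
  assumes n: "1 \<le> n" and x: "x \<in> cyl (replicate n b @ [\<not> b])"
  shows "(\<lambda>k. exp (- \<beta> * barrier b (n + k)) / lam ^ (k + 1) * \<Phi> (pt [\<not> b, b])) sums \<Phi> x"
proof -
  define a where "a m = \<Phi> (pt (replicate (n + m) b @ [\<not> b]))" for m
  have "(\<lambda>k. exp (- \<beta> * barrier b (n + k)) * \<Phi> (pt [\<not> b, b]) / lam ^ (k + 1)) sums a 0"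
  proof (rule recurrence_sums[OF lam_gt_1])
    show "\<bar>a m\<bar> \<le> 1" for m using Phi_pos Phi_le_1 by (simp add: a_def abs_of_pos)
    fix m
    have "\<Phi> (scons b (pt (replicate (n + m) b @ [\<not> b]))) = a (Suc m)"
      unfolding a_def using n by (intro Phi_const_on_run[of "Suc (n + m)" _ b]) (simp_all add: pt_in_cyl)
    then show "lam * a m = a (Suc m) + exp (- \<beta> * barrier b (n + m)) * \<Phi> (pt [\<not> b, b])"
      using eigen_run[of "n + m" "pt (replicate (n + m) b @ [\<not> b])" b] n
      by (simp add: a_def pt_in_cyl)
  qed
  moreover have "a 0 = \<Phi> x" using Phi_const_on_run[OF n pt_in_cyl x] by (simp add: a_def)
  ultimately show ?thesis by (simp add: mult.commute)
qed

lemma Phi_run_less_constant: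
  assumes \<beta>: "0 < \<beta>" and lim0: "lim (barrier b) = 0"
    and n: "1 \<le> n" and x: "x \<in> cyl (replicate n b @ [\<not> b])"
  shows "\<Phi> x < \<Phi> (\<lambda>_. b)"
proof -
  define c where "c = \<Phi> (pt [\<not> b, b])"
  define d where "d k = c / lam ^ (k + 1) - exp (- \<beta> * barrier b (n + k)) / lam ^ (k + 1) * c" for k
  have "(\<lambda>k. c / lam ^ (k + 1)) sums \<Phi> (\<lambda>_. b)"
    by (rule recurrence_sums[OF lam_gt_1, where B = "\<bar>\<Phi> (\<lambda>_. b)\<bar>"])
      (use eigen_constant[of b] lim0 in \<open>simp_all add: c_def\<close>)
  from sums_diff[OF this Phi_run_sums[OF n x]] have "d sums (\<Phi> (\<lambda>_. b) - \<Phi> x)"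
    unfolding d_def c_def .
  moreover have "0 < d k" for k
  proof -
    have "exp (- \<beta> * barrier b (n + k)) < 1" using barrier_pos[of "n + k" b] n \<beta> by simp
    moreover have "0 < c / lam ^ (k + 1)" using Phi_pos lam_pos by (simp add: c_def)
    ultimately have "exp (- \<beta> * barrier b (n + k)) * (c / lam ^ (k + 1)) < 1 * (c / lam ^ (k + 1))"
      by (rule mult_strict_right_mono)
    then show ?thesis by (simp add: d_def)
  qed
  ultimately have "0 < \<Phi> (\<lambda>_. b) - \<Phi> x" by (metis sums_unique suminf_pos sums_summable)
  then show ?thesis by simp
qed

lemma Phi_le_max_constants:
  assumes "0 < \<beta>" "lim H0 = 0" "lim H1 = 0"
  shows "\<Phi> x \<le> max (\<Phi> (\<lambda>_. False)) (\<Phi> (\<lambda>_. True))"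
proof -
  have "lim (barrier b) = 0" for b using assms by (cases b) (simp_all add: barrier_def)
  then have "\<Phi> x \<le> \<Phi> (\<lambda>_. x 0)"
    using constant_or_run[of x] Phi_run_less_constant[OF assms(1)] by (metis less_imp_le order_refl)
  then show ?thesis by (cases "x 0") auto
qed

lemma Phi_max_at_constants:
  assumes "0 < \<beta>" "lim H0 = 0" "lim H1 = 0" and "\<Phi> z = 1"
  shows "(SUP x. \<Phi> x) = max (\<Phi> (\<lambda>_. False)) (\<Phi> (\<lambda>_. True))"
    and "max (\<Phi> (\<lambda>_. False)) (\<Phi> (\<lambda>_. True)) = 1"
proof -
  show max_1: "max (\<Phi> (\<lambda>_. False)) (\<Phi> (\<lambda>_. True)) = 1"
    using Phi_le_max_constants[OF assms(1-3), of z] Phi_le_1 assms(4) by (simp add: antisym)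
  have "(SUP x. \<Phi> x) = 1" using assms(4) Phi_le_1 by (intro cSup_eq_maximum) auto
  with max_1 show "(SUP x. \<Phi> x) = max (\<Phi> (\<lambda>_. False)) (\<Phi> (\<lambda>_. True))" by simp
qed

end

section \<open>The eigenmeasure and its Jacobian\<close>

locale double_well_eigenmeasure = double_well +
  fixes \<beta> lam :: real and \<nu> :: "seq measure"
  assumes lam_pos: "0 < lam"
    and prob_space_nu: "prob_space \<nu>"
    and sets_nu: "sets \<nu> = sets (borel :: seq measure)"
    and eigen: "\<And>f. continuous_on UNIV f \<Longrightarrow> (\<integral>x. transfer H \<beta> f x \<partial>\<nu>) = lam * (\<integral>x. f x \<partial>\<nu>)"
begin

lemma space_nu: "space \<nu> = UNIV"
  using sets_eq_imp_space_eq[OF sets_nu] by simp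

lemma measurable_nu_eq: "measurable \<nu> M = measurable borel M"
  by (rule measurable_cong_sets[OF sets_nu refl])

lemma continuous_imp_measurable_nu: "continuous_on UNIV f \<Longrightarrow> f \<in> borel_measurable \<nu>"
  unfolding measurable_nu_eq by (rule borel_measurable_continuous_onI)

lemma measurable_shift_nu: "shift \<in> measurable \<nu> borel"
  unfolding measurable_nu_eq by (rule borel_measurable_shift)

lemma measure_cyl_eq_integral: "measure \<nu> (cyl w) = (\<integral>x. indicator (cyl w) x \<partial>\<nu>)"
  by (simp add: space_nu)

lemma integrable_continuous_nu:
  assumes f: "continuous_on UNIV (f :: seq \<Rightarrow> real)"
  shows "integrable \<nu> f"
proof -
  interpret prob_space \<nu> by (rule prob_space_nu)
  have "bounded (range f)"
    by (rule compact_imp_bounded[OF compact_continuous_image[OF f compact_UNIV_seq]])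
  then obtain B where "\<And>x. norm (f x) \<le> B" unfolding bounded_iff by auto
  then show ?thesis
    by (intro integrable_const_bound[where B = B] AE_I2 continuous_imp_measurable_nu f)
qed

lemma eigen_cyl_Cons:
  assumes g: "continuous_on UNIV g"
  shows "lam * (\<integral>x. indicator (cyl (a # w)) x * g x \<partial>\<nu>) =
         (\<integral>x. indicator (cyl w) x * (exp (- \<beta> * H (scons a x)) * g (scons a x)) \<partial>\<nu>)"
proof -
  have "transfer H \<beta> (\<lambda>x. indicator (cyl (a # w)) x * g x) =
        (\<lambda>x. indicator (cyl w) x * (exp (- \<beta> * H (scons a x)) * g (scons a x)))"
    by (rule ext, cases a) (simp_all add: transfer_def indicator_def)
  with eigen[of "\<lambda>x. indicator (cyl (a # w)) x * g x"] show ?thesis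
    by (simp add: continuous_on_mult continuous_on_indicator_cyl g)
qed

lemma measure_cyl_Cons:
  assumes "\<And>x. x \<in> cyl w \<Longrightarrow> H (scons a x) = h"
  shows "lam * measure \<nu> (cyl (a # w)) = exp (- \<beta> * h) * measure \<nu> (cyl w)"
proof -
  have "lam * measure \<nu> (cyl (a # w)) = lam * (\<integral>x. indicator (cyl (a # w)) x * 1 \<partial>\<nu>)"
    by (simp add: measure_cyl_eq_integral)
  also have "\<dots> = (\<integral>x. indicator (cyl w) x * (exp (- \<beta> * H (scons a x)) * 1) \<partial>\<nu>)"
    by (rule eigen_cyl_Cons) simp
  also have "\<dots> = (\<integral>x. exp (- \<beta> * h) * indicator (cyl w) x \<partial>\<nu>)"
    using assms by (intro Bochner_Integration.integral_cong) (auto simp: indicator_def)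
  also have "\<dots> = exp (- \<beta> * h) * measure \<nu> (cyl w)" by (simp add: measure_cyl_eq_integral)
  finally show ?thesis .
qed

lemma measure_run:
  "1 \<le> n \<Longrightarrow> measure \<nu> (cyl (replicate n b @ [\<not> b])) = measure \<nu> (cyl [b, \<not> b]) / lam ^ (n - 1)"
proof (induction n rule: nat_induct_at_least)
  case (Suc n)
  have "lam * measure \<nu> (cyl (b # replicate n b @ [\<not> b])) = measure \<nu> (cyl (replicate n b @ [\<not> b]))"
  proof (rule measure_cyl_Cons[where h = 0, simplified])
    fix x assume "x \<in> cyl (replicate n b @ [\<not> b])"
    then show "H (scons b x) = 0" using Suc.hyps by (simp add: H_flat mem_cyl_run mem_cyl_pair)
  qed
  moreover have "lam ^ (Suc n - 1) = lam * lam ^ (n - 1)" using Suc.hyps by (cases n) auto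
  ultimately show ?case using Suc.IH lam_pos by (simp add: field_simps)
qed simp

lemma measure_well:
  assumes "1 \<le> n"
  shows "measure \<nu> (cyl ((\<not> b) # replicate n b @ [\<not> b])) =
    exp (- \<beta> * barrier b n) * measure \<nu> (cyl [b, \<not> b]) / lam ^ n"
proof -
  have "lam * measure \<nu> (cyl ((\<not> b) # replicate n b @ [\<not> b])) =
      exp (- \<beta> * barrier b n) * (measure \<nu> (cyl [b, \<not> b]) / lam ^ (n - 1))"
    using measure_cyl_Cons[where h = "barrier b n"] assms by (simp add: H_well measure_run)
  moreover have "lam ^ n = lam * lam ^ (n - 1)" using assms by (cases n) auto
  ultimately show ?thesis using lam_pos by (simp add: field_simps)
qed

definition nu_jacobian :: "seq \<Rightarrow> real" where
  "nu_jacobian x = lam * exp (\<beta> * H x)"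

lemma nu_jacobian_nonneg: "0 \<le> nu_jacobian x"
  using lam_pos by (simp add: nu_jacobian_def)

lemma continuous_nu_jacobian: "continuous_on UNIV nu_jacobian"
  unfolding nu_jacobian_def by (intro continuous_intros continuous_H)

lemma integral_cyl_Cons_nu_jacobian:
  "(\<integral>x. indicator (cyl (a # w)) x * nu_jacobian x \<partial>\<nu>) = measure \<nu> (cyl w)"
proof -
  have "(\<integral>x. indicator (cyl (a # w)) x * nu_jacobian x \<partial>\<nu>) =
      lam * (\<integral>x. indicator (cyl (a # w)) x * exp (\<beta> * H x) \<partial>\<nu>)"
    by (simp add: nu_jacobian_def mult.left_commute)
  also have "\<dots> = (\<integral>x. indicator (cyl w) x * (exp (- \<beta> * H (scons a x)) * exp (\<beta> * H (scons a x))) \<partial>\<nu>)"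
    by (rule eigen_cyl_Cons) (intro continuous_intros continuous_H)
  also have "\<dots> = measure \<nu> (cyl w)"
    by (simp add: measure_cyl_eq_integral flip: exp_add)
  finally show ?thesis .
qed

text \<open>The Jacobian identity for \<open>f = indicator (cyl w)\<close> says that \<open>shift\<close> pushes the measure
  with density \<open>indicator (cyl [a]) * nu_jacobian\<close> forward to \<open>\<nu>\<close>; cylinders form an
  intersection-stable generator of the Borel sets, so this is all one needs to check.\<close>

lemma distr_shift_density_nu_jacobian:
  "distr (density \<nu> (\<lambda>x. ennreal (indicator (cyl [a]) x * nu_jacobian x))) borel shift = \<nu>"
    (is "distr ?D borel shift = \<nu>")
proof -
  interpret prob_space \<nu> by (rule prob_space_nu)
  have shift_measurable: "shift \<in> measurable ?D borel"
    using measurable_shift_nu by simp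
  have on_cyl: "emeasure (distr ?D borel shift) (cyl w) = emeasure \<nu> (cyl w)" for w
  proof -
    have "emeasure (distr ?D borel shift) (cyl w) = emeasure ?D (shift -` cyl w)"
      using shift_measurable borel_open[OF open_cyl] by (simp add: emeasure_distr space_nu)
    also have "\<dots> = (\<integral>\<^sup>+x. ennreal (indicator (cyl [a]) x * nu_jacobian x) * indicator (shift -` cyl w) x \<partial>\<nu>)"
    proof (rule emeasure_density)
      show "(\<lambda>x. ennreal (indicator (cyl [a]) x * nu_jacobian x)) \<in> borel_measurable \<nu>"
        by (intro measurable_compose[OF _ measurable_ennreal] continuous_imp_measurable_nu
            continuous_on_mult continuous_on_indicator_cyl continuous_nu_jacobian)
      show "shift -` cyl w \<in> sets \<nu>"
        using measurable_sets[OF measurable_shift_nu borel_open[OF open_cyl]] by (simp add: space_nu)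
    qed
    also have "\<dots> = (\<integral>\<^sup>+x. ennreal (indicator (cyl (a # w)) x * nu_jacobian x) \<partial>\<nu>)"
      by (intro nn_integral_cong) (simp add: mem_cyl_Cons indicator_def)
    also have "\<dots> = ennreal (\<integral>x. indicator (cyl (a # w)) x * nu_jacobian x \<partial>\<nu>)"
      by (intro nn_integral_eq_integral integrable_continuous_nu AE_I2 continuous_on_mult
          continuous_on_indicator_cyl continuous_nu_jacobian) (simp add: nu_jacobian_nonneg)
    finally show ?thesis by (simp add: integral_cyl_Cons_nu_jacobian emeasure_eq_measure)
  qed
  show ?thesis
  proof (rule measure_eqI_generator_eq[OF Int_stable_cyl, where \<Omega> = UNIV and A = "\<lambda>_. cyl []"])
    show "sets (distr ?D borel shift) = sigma_sets UNIV (insert {} (range cyl))"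
      "sets \<nu> = sigma_sets UNIV (insert {} (range cyl))"
      by (simp_all add: sets_nu sets_borel_seq_cyl)
    show "emeasure (distr ?D borel shift) (cyl []) \<noteq> \<infinity>" for i :: nat
      using on_cyl[of "[]"] by (simp add: emeasure_eq_measure)
  qed (auto simp: on_cyl image_iff intro: exI[of _ "[]"])
qed

lemma is_jacobian_nu_jacobian: "is_jacobian \<nu> nu_jacobian"
  unfolding is_jacobian_def
proof (intro conjI allI impI)
  show "nu_jacobian \<in> borel_measurable \<nu>"
    by (rule continuous_imp_measurable_nu[OF continuous_nu_jacobian])
  show "0 \<le> nu_jacobian x" for x by (rule nu_jacobian_nonneg)
  fix f :: "seq \<Rightarrow> real" assume "f \<in> borel_measurable \<nu> \<and> bounded (range f)"
  then have f: "f \<in> borel_measurable borel" by (simp add: measurable_nu_eq)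
  have "(\<integral>x. indicator (cyl [a]) x * f (shift x) * nu_jacobian x \<partial>\<nu>) = (\<integral>x. f x \<partial>\<nu>)" for a
  proof -
    let ?g = "\<lambda>x. indicator (cyl [a]) x * nu_jacobian x"
    have "(\<integral>x. f x \<partial>\<nu>) = (\<integral>x. f x \<partial>distr (density \<nu> (\<lambda>x. ennreal (?g x))) borel shift)"
      by (simp only: distr_shift_density_nu_jacobian)
    also have "\<dots> = (\<integral>x. f (shift x) \<partial>density \<nu> (\<lambda>x. ennreal (?g x)))"
      using measurable_shift_nu f by (intro integral_distr) (simp_all add: measurable_nu_eq)
    also have "\<dots> = (\<integral>x. ?g x *\<^sub>R f (shift x) \<partial>\<nu>)"
      by (intro integral_density AE_I2 measurable_compose[OF measurable_shift_nu f]
          continuous_imp_measurable_nu continuous_on_mult continuous_on_indicator_cyl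
          continuous_nu_jacobian) (simp add: nu_jacobian_nonneg)
    finally show ?thesis by (simp add: mult_ac)
  qed
  then show "(\<integral>x. indicator (cyl [False]) x * f (shift x) * nu_jacobian x \<partial>\<nu>) = (\<integral>x. f x \<partial>\<nu>)"
    "(\<integral>x. indicator (cyl [True]) x * f (shift x) * nu_jacobian x \<partial>\<nu>) = (\<integral>x. f x \<partial>\<nu>)"
    by blast+
qed

lemma nu_jacobian_values:
  "\<forall>x \<in> cyl [True, True]. nu_jacobian x = lam"
  "\<forall>x \<in> cyl [False, False]. nu_jacobian x = lam"
  "\<forall>n\<ge>1. \<forall>x \<in> cyl ([False] @ replicate n True @ [False]). nu_jacobian x = lam * exp (\<beta> * H0 n)"
  "\<forall>n\<ge>1. \<forall>x \<in> cyl ([True] @ replicate n False @ [True]). nu_jacobian x = lam * exp (\<beta> * H1 n)"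
  using H_well[where b = True] H_well[where b = False]
  by (auto simp: nu_jacobian_def H_flat barrier_def)

end

theorem proposition3p4:
  fixes H :: "seq \<Rightarrow> real" and H0 H1 :: "nat \<Rightarrow> real"
    and \<beta> lam :: real and \<Phi> :: "seq \<Rightarrow> real" and \<nu> :: "seq measure"
  assumes rdw: "reduced_double_well H H0 H1"
    and beta: "\<beta> > 0"
    and Phi_cont: "continuous_on UNIV \<Phi>"
    and Phi_pos: "\<forall>x. 0 < \<Phi> x"
    and Phi_max: "(\<forall>x. \<Phi> x \<le> 1) \<and> (\<exists>x. \<Phi> x = 1)"
    and lam_pos: "lam > 0"
    and eigen: "\<forall>x. transfer H \<beta> \<Phi> x = lam * \<Phi> x"
    and nu_prob: "prob_space \<nu>"
    and nu_sets: "sets \<nu> = sets (borel :: seq measure)"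
    and nu_eigen: "\<forall>f::seq \<Rightarrow> real. continuous_on UNIV f \<longrightarrow>
                     (\<integral>x. transfer H \<beta> f x \<partial>\<nu>) = lam * (\<integral>x. f x \<partial>\<nu>)"
  shows
    "(\<forall>n\<ge>1. \<forall>x \<in> cyl (replicate n False @ [True]). \<forall>y \<in> cyl (replicate n False @ [True]). \<Phi> x = \<Phi> y) \<and>
     (\<forall>n\<ge>1. \<forall>x \<in> cyl (replicate n True @ [False]). \<forall>y \<in> cyl (replicate n True @ [False]). \<Phi> x = \<Phi> y) \<and>
     (\<exists>J. is_jacobian \<nu> J \<and>
        (\<forall>x \<in> cyl [True, True]. J x = lam) \<and>
        (\<forall>x \<in> cyl [False, False]. J x = lam) \<and>
        (\<forall>n\<ge>1. \<forall>x \<in> cyl ([False] @ replicate n True @ [False]). J x = lam * exp (\<beta> * H0 n)) \<and>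
        (\<forall>n\<ge>1. \<forall>x \<in> cyl ([True] @ replicate n False @ [True]). J x = lam * exp (\<beta> * H1 n))) \<and>
     (\<forall>n\<ge>1. \<forall>x \<in> cyl (replicate n False @ [True]).
        (\<lambda>k. exp (- \<beta> * H1 (n + k)) / lam ^ (k + 1) * \<Phi> (pt [True, False])) sums \<Phi> x) \<and>
     \<Phi> (\<lambda>_. False) = exp (- \<beta> * lim H1) / (lam - 1) * \<Phi> (pt [True, False]) \<and>
     (\<forall>n\<ge>1. \<forall>x \<in> cyl (replicate n True @ [False]).
        (\<lambda>k. exp (- \<beta> * H0 (n + k)) / lam ^ (k + 1) * \<Phi> (pt [False, True])) sums \<Phi> x) \<and>
     \<Phi> (\<lambda>_. True) = exp (- \<beta> * lim H0) / (lam - 1) * \<Phi> (pt [False, True]) \<and>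
     (lim H0 = 0 \<and> lim H1 = 0 \<longrightarrow>
        (SUP x. \<Phi> x) = max (\<Phi> (\<lambda>_. False)) (\<Phi> (\<lambda>_. True)) \<and>
        max (\<Phi> (\<lambda>_. False)) (\<Phi> (\<lambda>_. True)) = 1) \<and>
     (\<forall>n\<ge>1. measure \<nu> (cyl (replicate n True @ [False])) = measure \<nu> (cyl [True, False]) / lam ^ (n - 1)) \<and>
     (\<forall>n\<ge>1. measure \<nu> (cyl (replicate n False @ [True])) = measure \<nu> (cyl [False, True]) / lam ^ (n - 1)) \<and>
     (\<forall>n\<ge>1. measure \<nu> (cyl ([False] @ replicate n True @ [False])) =
                exp (- \<beta> * H0 n) * measure \<nu> (cyl [True, False]) / lam ^ n) \<and>
     (\<forall>n\<ge>1. measure \<nu> (cyl ([True] @ replicate n False @ [True])) =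
                exp (- \<beta> * H1 n) * measure \<nu> (cyl [False, True]) / lam ^ n)"
proof -
  interpret \<Phi>: double_well_eigenfunction H H0 H1 \<beta> lam \<Phi>
    by unfold_locales (use rdw Phi_cont Phi_pos Phi_max lam_pos eigen in blast)+
  interpret \<nu>: double_well_eigenmeasure H H0 H1 \<beta> lam \<nu>
    using rdw lam_pos nu_prob nu_sets nu_eigen
    by (simp add: double_well_eigenmeasure_def double_well_eigenmeasure_axioms_def double_well_def)
  have barrier: "\<Phi>.barrier False = H1" "\<Phi>.barrier True = H0" by (simp_all add: \<Phi>.barrier_def)
  obtain z where "\<Phi> z = 1" using Phi_max by blast
  show ?thesis
    apply (intro conjI impI)
    subgoal by (intro allI impI ballI \<Phi>.Phi_const_on_run[of _ _ False]) simp_all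
    subgoal by (intro allI impI ballI \<Phi>.Phi_const_on_run[of _ _ True]) simp_all
    subgoal using \<nu>.is_jacobian_nu_jacobian \<nu>.nu_jacobian_values by blast
    subgoal using \<Phi>.Phi_run_sums[of _ _ False] by (simp add: barrier)
    subgoal using \<Phi>.Phi_constant[of False] by (simp add: barrier)
    subgoal using \<Phi>.Phi_run_sums[of _ _ True] by (simp add: barrier)
    subgoal using \<Phi>.Phi_constant[of True] by (simp add: barrier)
    subgoal using \<Phi>.Phi_max_at_constants[OF beta _ _ \<open>\<Phi> z = 1\<close>] by simp
    subgoal using \<Phi>.Phi_max_at_constants[OF beta _ _ \<open>\<Phi> z = 1\<close>] by simp
    subgoal using \<nu>.measure_run[of _ True] by simp
    subgoal using \<nu>.measure_run[of _ False] by simp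
    subgoal using \<nu>.measure_well[of _ True] by (simp add: barrier)
    subgoal using \<nu>.measure_well[of _ False] by (simp add: barrier)
    done
qed

end
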